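(* Let $q\ge 2$ and $L\ge 2$ be integers and let $\mathcal{C}\subseteq[q]^n$ be a $q$-ary code. Suppose that for every subset $\{c_1,\dots,c_L\}$ of $L$ distinct codewords of $\mathcal{C}$, the average pairwise relative Hamming distance $\binom{L}{2}^{-1}\sum_{1\le i<j\le L}\delta(c_i,c_j)$ is at least $\delta$. Then $\mathcal{C}$ is $(J_q(\delta-\delta/L),\,L-1)$-list decodable.
   Context: $[q]=\{0,1,\dots,q-1\}$. For $x,y\in[q]^n$, $\delta(x,y)$ is the fraction of coordinates $i$ with $x_i\ne y_i$. A code $\mathcal{C}\subseteq[q]^n$ is $(\rho,\ell)$-list decodable if for every $y\in[q]^n$ the number of $c\in\mathcal{C}$ with $\delta(c,y)<\rho$ is at most $\ell$. The Johnson radius function $J_q:[0,1-1/q]\to[0,1]$ is $J_q(x)=\frac{q-1}{q}\Big(1-\sqrt{1-\frac{qx}{q-1}}\Big)$. *)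

theory Defs
  imports Complex_Main
begin

definition words :: "nat \<Rightarrow> nat \<Rightarrow> nat list set" where
  "words q n = {x. length x = n \<and> set x \<subseteq> {..<q}}"

definition rel_dist :: "nat list \<Rightarrow> nat list \<Rightarrow> real" where
  "rel_dist x y = real (card {i. i < length x \<and> x ! i \<noteq> y ! i}) / real (length x)"

definition list_decodable ::
  "nat \<Rightarrow> nat \<Rightarrow> nat list set \<Rightarrow> real \<Rightarrow> nat \<Rightarrow> bool" where
  "list_decodable q n C \<rho> l \<longleftrightarrow>
     (\<forall>y \<in> words q n. card {c \<in> C. rel_dist c y < \<rho>} \<le> l)"

definition johnson :: "nat \<Rightarrow> real \<Rightarrow> real" where
  "johnson q x = (real q - 1) / real q * (1 - sqrt (1 - real q * x / (real q - 1)))"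

end

theory Submission
  imports Defs "HOL-Analysis.Convex"
begin

text \<open>Suppose \<open>L\<close> distinct codewords \<open>c\<^sub>1, ..., c\<^sub>L\<close> lie within distance \<open>\<rho>\<close> of a word \<open>y\<close>,
  and let \<open>E = \<Sum>\<^sub>i \<delta>(c\<^sub>i, y)\<close>. Counting disagreeing pairs coordinate by coordinate, and applying
  Cauchy-Schwarz once over the letters different from \<open>y\<^sub>k\<close> and once over the coordinates, gives
  \<open>\<Sum>\<^sub>i\<^sub>,\<^sub>j \<delta>(c\<^sub>i, c\<^sub>j) \<le> L\<^sup>2 - (L - E)\<^sup>2 - E\<^sup>2 / (q - 1) = L\<^sup>2 (2 e - q e\<^sup>2 / (q - 1))\<close> with
  \<open>e = E / L < \<rho>\<close>. The right-hand side is increasing in \<open>e \<le> 1 - 1/q\<close> and equals \<open>L\<^sup>2 x\<close> at \<open>e = J\<^sub>q(x)\<close>,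
  so for \<open>\<rho> = J\<^sub>q(\<delta> - \<delta> / L)\<close> the average pairwise distance of the \<open>c\<^sub>i\<close> drops below \<open>\<delta>\<close>.\<close>

lemma real_choose_two: "real (L choose 2) = real L * (real L - 1) / 2"
  by (cases L) (auto simp add: choose_two field_char_0_class.of_nat_div mod_eq_0_iff_dvd algebra_simps)

lemma ex_distinct_list_of_card_le:
  assumes "L \<le> card S"
  shows "\<exists>cs. length cs = L \<and> distinct cs \<and> set cs \<subseteq> S"
proof -
  obtain T where "T \<subseteq> S" "card T = L" "finite T"
    using obtain_subset_with_card_n[OF assms] .
  then show ?thesis
    by (metis distinct_card finite_distinct_list)
qed

lemma sum_sum_if_less_eq_half:
  fixes g :: "'a::linorder \<Rightarrow> 'a \<Rightarrow> 'b::field_char_0"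
  assumes "\<And>i j. i \<in> I \<Longrightarrow> j \<in> I \<Longrightarrow> g i j = g j i" and "\<And>i. i \<in> I \<Longrightarrow> g i i = 0"
  shows "(\<Sum>i\<in>I. \<Sum>j\<in>I. if i < j then g i j else 0) = (\<Sum>i\<in>I. \<Sum>j\<in>I. g i j) / 2"
proof -
  have "(\<Sum>i\<in>I. \<Sum>j\<in>I. g i j)
      = (\<Sum>i\<in>I. \<Sum>j\<in>I. if i < j then g i j else 0) + (\<Sum>i\<in>I. \<Sum>j\<in>I. if j < i then g i j else 0)"
    unfolding sum.distrib[symmetric] using assms(2) by (intro sum.cong refl) auto
  also have "(\<Sum>i\<in>I. \<Sum>j\<in>I. if j < i then g i j else 0) = (\<Sum>j\<in>I. \<Sum>i\<in>I. if j < i then g j i else 0)"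
    by (subst sum.swap) (use assms(1) in \<open>intro sum.cong refl, auto\<close>)
  finally show ?thesis by simp
qed

lemma card_mult_square_le_sum_squares:
  fixes f :: "'a \<Rightarrow> real"
  assumes "(\<Sum>k\<in>K. f k) = real (card K) * e"
  shows "real (card K) * e\<^sup>2 \<le> (\<Sum>k\<in>K. (f k)\<^sup>2)"
proof (cases "card K = 0")
  case False
  have "real (card K) * (real (card K) * e\<^sup>2) \<le> real (card K) * (\<Sum>k\<in>K. (f k)\<^sup>2)"
    using sum_squared_le_sum_of_squares[of f K] assms by (simp add: power2_eq_square algebra_simps)
  with False show ?thesis by simp
qed (simp add: sum_nonneg)

lemma square_plus_sum_rest_squared_le_sum_squares:
  fixes m :: "'a \<Rightarrow> real"
  assumes "finite B" and "a \<in> B"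
  shows "(m a)\<^sup>2 + ((\<Sum>b\<in>B. m b) - m a)\<^sup>2 / (real (card B) - 1) \<le> (\<Sum>b\<in>B. (m b)\<^sup>2)"
proof -
  have rest: "(\<Sum>b\<in>B. m b) - m a = (\<Sum>b\<in>B - {a}. m b)"
    and squares: "(\<Sum>b\<in>B. (m b)\<^sup>2) = (m a)\<^sup>2 + (\<Sum>b\<in>B - {a}. (m b)\<^sup>2)"
    using assms by (simp_all add: sum.remove)
  have "card (B - {a}) = real (card B) - 1"
    using assms card_gt_0_iff[of B] by (auto simp: Suc_le_eq)
  then have "(\<Sum>b\<in>B - {a}. m b)\<^sup>2 / (real (card B) - 1) \<le> (\<Sum>b\<in>B - {a}. (m b)\<^sup>2)"
    using sum_squared_le_sum_of_squares[of m "B - {a}"]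
    by (simp add: divide_le_eq sum_nonneg mult.commute)
  then show ?thesis unfolding rest squares by simp
qed

lemma sum_pairs_of_bool_eq_eq_sum_squares:
  assumes "finite B" and "v ` I \<subseteq> B"
  shows "(\<Sum>i\<in>I. \<Sum>j\<in>I. of_bool (v i = v j) :: real) = (\<Sum>b\<in>B. (\<Sum>i\<in>I. of_bool (v i = b))\<^sup>2)"
proof -
  have "(\<Sum>b\<in>B. (\<Sum>i\<in>I. of_bool (v i = b) :: real)\<^sup>2)
      = (\<Sum>b\<in>B. \<Sum>i\<in>I. \<Sum>j\<in>I. of_bool (v i = b) * of_bool (v j = b))"
    by (simp only: power2_eq_square sum_product)
  also have "\<dots> = (\<Sum>i\<in>I. \<Sum>j\<in>I. \<Sum>b\<in>B. of_bool (v i = b) * of_bool (v j = b))"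
    by (subst sum.swap) (intro sum.cong refl sum.swap)
  also have "\<dots> = (\<Sum>i\<in>I. \<Sum>j\<in>I. of_bool (v i = v j))"
    using assms by (intro sum.cong refl) (auto simp: if_distrib cong: if_cong)
  finally show ?thesis ..
qed

lemma sum_pairs_of_bool_neq_le:
  assumes "finite I" and "finite B" and "v ` I \<subseteq> B" and "a \<in> B"
  defines "u \<equiv> (\<Sum>i\<in>I. of_bool (v i \<noteq> a) :: real)"
  shows "(\<Sum>i\<in>I. \<Sum>j\<in>I. of_bool (v i \<noteq> v j))
    \<le> (real (card I))\<^sup>2 - (real (card I) - u)\<^sup>2 - u\<^sup>2 / (real (card B) - 1)"
proof -
  define m where "m b = (\<Sum>i\<in>I. of_bool (v i = b) :: real)" for b
  have total: "(\<Sum>b\<in>B. m b) = real (card I)"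
  proof -
    have "(\<Sum>b\<in>B. of_bool (v i = b) :: real) = 1" if "i \<in> I" for i
      using that assms(2,3) by (auto simp: of_bool_def simp del: sum_of_bool_eq)
    then show ?thesis
      unfolding m_def by (subst sum.swap) simp
  qed
  have agree: "m a = real (card I) - u"
    unfolding m_def u_def using assms(1) by (simp add: of_bool_not_iff sum_subtractf del: sum_of_bool_eq)
  have "(\<Sum>i\<in>I. \<Sum>j\<in>I. of_bool (v i \<noteq> v j)) = (real (card I))\<^sup>2 - (\<Sum>b\<in>B. (m b)\<^sup>2)"
    using sum_pairs_of_bool_eq_eq_sum_squares[OF assms(2,3)] unfolding m_def
    by (simp add: of_bool_not_iff sum_subtractf power2_eq_square del: sum_of_bool_eq)
  also have "\<dots> \<le> (real (card I))\<^sup>2 - (real (card I) - u)\<^sup>2 - u\<^sup>2 / (real (card B) - 1)"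
    using square_plus_sum_rest_squared_le_sum_squares[OF assms(2,4), of m]
    unfolding total agree by simp
  finally show ?thesis .
qed

lemma rel_dist_self [simp]: "rel_dist x x = 0"
  by (simp add: rel_dist_def)

lemma rel_dist_commute: "length x = length y \<Longrightarrow> rel_dist x y = rel_dist y x"
  unfolding rel_dist_def by (simp add: eq_commute[of "x ! _"])

lemma rel_dist_nonneg: "rel_dist x y \<ge> 0"
  by (simp add: rel_dist_def)

lemma length_mult_rel_dist:
  "real (length x) * rel_dist x y = (\<Sum>k<length x. of_bool (x ! k \<noteq> y ! k))"
  by (simp add: rel_dist_def Int_def)

lemma sum_pairwise_rel_dist_le:
  assumes "y \<in> words q n" and "\<And>i. i < L \<Longrightarrow> c i \<in> words q n"
  defines "E \<equiv> \<Sum>i<L. rel_dist (c i) y"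
  shows "(\<Sum>i<L. \<Sum>j<L. rel_dist (c i) (c j)) \<le> (real L)\<^sup>2 - (real L - E)\<^sup>2 - E\<^sup>2 / (real q - 1)"
proof (cases "n = 0")
  case True
  then show ?thesis
    using assms by (simp add: E_def rel_dist_def words_def)
next
  case False
  have length_c: "length (c i) = n" if "i < L" for i
    using assms(2)[OF that] by (simp add: words_def)
  have letters_c: "c i ! k < q" if "i < L" "k < n" for i k
    using assms(2)[OF that(1)] that(2) by (auto simp: words_def subset_iff)
  have letters_y: "y ! k < q" if "k < n" for k
    using assms(1) that by (auto simp: words_def subset_iff)
  then have "q > 0"
    using False by fastforce
  have n_mult_rel_dist: "real n * rel_dist (c i) z = (\<Sum>k<n. of_bool (c i ! k \<noteq> z ! k))"
    if "i < L" for i z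
    using length_mult_rel_dist[of "c i" z] length_c[OF that] False by simp
  define u where "u k = (\<Sum>i<L. of_bool (c i ! k \<noteq> y ! k) :: real)" for k
  have "real n * (\<Sum>i<L. \<Sum>j<L. rel_dist (c i) (c j))
      = (\<Sum>i<L. \<Sum>j<L. \<Sum>k<n. of_bool (c i ! k \<noteq> c j ! k))"
    unfolding sum_distrib_left by (simp add: n_mult_rel_dist)
  also have "\<dots> = (\<Sum>k<n. \<Sum>i<L. \<Sum>j<L. of_bool (c i ! k \<noteq> c j ! k))"
    by (subst sum.swap) (intro sum.cong refl sum.swap)
  also have "\<dots> \<le> (\<Sum>k<n. (real L)\<^sup>2 - (real L - u k)\<^sup>2 - (u k)\<^sup>2 / (real q - 1))"
  proof (rule sum_mono)
    fix k assume "k \<in> {..<n}"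
    then show "(\<Sum>i<L. \<Sum>j<L. of_bool (c i ! k \<noteq> c j ! k))
        \<le> (real L)\<^sup>2 - (real L - u k)\<^sup>2 - (u k)\<^sup>2 / (real q - 1)"
      using sum_pairs_of_bool_neq_le[of "{..<L}" "{..<q}" "\<lambda>i. c i ! k" "y ! k"] letters_c letters_y
      unfolding u_def by (simp add: image_subset_iff)
  qed
  also have "\<dots> = real n * (real L)\<^sup>2 - (\<Sum>k<n. (real L - u k)\<^sup>2) - (\<Sum>k<n. (u k)\<^sup>2) / (real q - 1)"
    by (simp add: sum_subtractf sum_divide_distrib)
  also have "\<dots> \<le> real n * ((real L)\<^sup>2 - (real L - E)\<^sup>2 - E\<^sup>2 / (real q - 1))"
  proof -
    have "(\<Sum>k<n. u k) = (\<Sum>i<L. \<Sum>k<n. of_bool (c i ! k \<noteq> y ! k))"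
      unfolding u_def by (rule sum.swap)
    also have "\<dots> = real n * E"
      unfolding E_def sum_distrib_left by (simp add: n_mult_rel_dist)
    finally have sum_u: "(\<Sum>k<n. u k) = real (card {..<n}) * E"
      by simp
    have "(\<Sum>k<n. real L - u k) = real (card {..<n}) * (real L - E)"
      using sum_u by (simp add: sum_subtractf algebra_simps)
    from card_mult_square_le_sum_squares[OF this] card_mult_square_le_sum_squares[OF sum_u]
    have "real n * (real L - E)\<^sup>2 \<le> (\<Sum>k<n. (real L - u k)\<^sup>2)"
      and "real n * E\<^sup>2 / (real q - 1) \<le> (\<Sum>k<n. (u k)\<^sup>2) / (real q - 1)"
      using \<open>q > 0\<close> by (simp_all add: divide_right_mono)
    then show ?thesis
      by (simp add: algebra_simps)
  qed
  finally show ?thesis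
    using False by simp
qed

text \<open>With \<open>\<theta> = (q - 1) / q\<close>, the map \<open>e \<mapsto> 2 e - q e\<^sup>2 / (q - 1) = \<theta> - (\<theta> - e)\<^sup>2 / \<theta>\<close>
  is increasing on \<open>[0, \<theta>]\<close> and inverts \<^const>\<open>johnson\<close> there.\<close>

lemma quadratic_less_if_less_johnson:
  assumes "q \<ge> 2" and "0 \<le> e" and "e < johnson q x"
  shows "2 * e - real q * e\<^sup>2 / (real q - 1) < x"
proof -
  define \<theta> where "\<theta> = (real q - 1) / real q"
  have \<theta>: "0 < \<theta>" "\<theta> \<le> 1"
    using assms(1) by (auto simp: \<theta>_def)
  have as_square: "2 * e - real q * e\<^sup>2 / (real q - 1) = \<theta> - (\<theta> - e)\<^sup>2 / \<theta>"
    using assms(1) by (simp add: \<theta>_def field_simps power2_eq_square)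
  have johnson_\<theta>: "johnson q x = \<theta> * (1 - sqrt (1 - x / \<theta>))"
    using assms(1) by (simp add: johnson_def \<theta>_def field_simps)
  show ?thesis
  proof (cases "x \<le> \<theta>")
    case False
    then show ?thesis
      using \<theta> unfolding as_square by (smt (verit) divide_nonneg_pos zero_le_power2)
  next
    case True
    define s where "s = sqrt (1 - x / \<theta>)"
    have "0 \<le> s" and s_square: "s\<^sup>2 = 1 - x / \<theta>"
      using True \<theta> by (simp_all add: s_def)
    have "\<theta> * s < \<theta> - e"
      using assms(3) unfolding johnson_\<theta> s_def[symmetric] by (simp add: algebra_simps)
    then have "(\<theta> * s)\<^sup>2 / \<theta> < (\<theta> - e)\<^sup>2 / \<theta>"
      using \<open>0 \<le> s\<close> \<theta> by (intro divide_strict_right_mono power_strict_mono) auto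
    moreover have "(\<theta> * s)\<^sup>2 / \<theta> = \<theta> - x"
      using s_square \<theta> by (simp add: field_simps power2_eq_square)
    ultimately show ?thesis
      unfolding as_square by linarith
  qed
qed

lemma average_pairwise_rel_dist_less:
  assumes "q \<ge> 2" and "L \<ge> 2" and "y \<in> words q n"
    and "length cs = L" and "set cs \<subseteq> words q n"
    and "\<forall>c\<in>set cs. rel_dist c y < johnson q (\<delta> - \<delta> / real L)"
  shows "(\<Sum>i<L. \<Sum>j<L. if i < j then rel_dist (cs ! i) (cs ! j) else 0) / real (L choose 2) < \<delta>"
proof -
  define E where "E = (\<Sum>i<L. rel_dist (cs ! i) y)"
  define P where "P = (\<Sum>i<L. \<Sum>j<L. rel_dist (cs ! i) (cs ! j))"
  have L: "real L \<ge> 2"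
    using assms(2) by simp
  have in_words: "cs ! i \<in> words q n" if "i < L" for i
    using that assms(4,5) nth_mem by blast
  have "E < (\<Sum>i<L. johnson q (\<delta> - \<delta> / real L))"
    unfolding E_def using assms(2,4,6) by (intro sum_strict_mono) (auto simp: lessThan_empty_iff)
  then have "2 * (E / L) - real q * (E / L)\<^sup>2 / (real q - 1) < \<delta> - \<delta> / real L"
    using L assms(1) by (intro quadratic_less_if_less_johnson) (auto simp: E_def field_simps rel_dist_nonneg intro: sum_nonneg)
  then have "(real L)\<^sup>2 * (2 * (E / L) - real q * (E / L)\<^sup>2 / (real q - 1))
      < (real L)\<^sup>2 * (\<delta> - \<delta> / real L)"
    using L by simp
  moreover have "(real L)\<^sup>2 * (2 * (E / L) - real q * (E / L)\<^sup>2 / (real q - 1))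
      = (real L)\<^sup>2 - (real L - E)\<^sup>2 - E\<^sup>2 / (real q - 1)"
    using L assms(1) by (simp add: field_simps power2_eq_square)
  moreover have "(real L)\<^sup>2 * (\<delta> - \<delta> / real L) = real L * (real L - 1) * \<delta>"
    using L by (simp add: field_simps power2_eq_square)
  ultimately have "(real L)\<^sup>2 - (real L - E)\<^sup>2 - E\<^sup>2 / (real q - 1) < real L * (real L - 1) * \<delta>"
    by simp
  with sum_pairwise_rel_dist_le[of y q n L "(!) cs"] assms(3) in_words
  have "P < real L * (real L - 1) * \<delta>"
    unfolding P_def E_def by fastforce
  moreover have "(\<Sum>i<L. \<Sum>j<L. if i < j then rel_dist (cs ! i) (cs ! j) else 0) = P / 2"
    unfolding P_def using in_words
    by (intro sum_sum_if_less_eq_half) (auto simp: words_def intro: rel_dist_commute)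
  ultimately show ?thesis
    using L by (simp add: real_choose_two field_simps)
qed

theorem theorem2p3:
  fixes q L n :: nat and C :: "nat list set" and \<delta> :: real
  assumes "q \<ge> 2" and "L \<ge> 2"
    and "C \<subseteq> words q n"
    and "\<forall>cs. length cs = L \<and> distinct cs \<and> set cs \<subseteq> C \<longrightarrow>
           (\<Sum>i<L. \<Sum>j<L. if i < j then rel_dist (cs ! i) (cs ! j) else 0)
             / real (L choose 2) \<ge> \<delta>"
  shows "list_decodable q n C (johnson q (\<delta> - \<delta> / real L)) (L - 1)"
  unfolding list_decodable_def
proof
  fix y assume y: "y \<in> words q n"
  let ?close = "{c \<in> C. rel_dist c y < johnson q (\<delta> - \<delta> / real L)}"
  show "card ?close \<le> L - 1"
  proof (rule ccontr)
    assume "\<not> card ?close \<le> L - 1"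
    then have "L \<le> card ?close"
      by linarith
    then obtain cs where cs: "length cs = L" "distinct cs" "set cs \<subseteq> ?close"
      using ex_distinct_list_of_card_le by blast
    then have "\<delta> \<le> (\<Sum>i<L. \<Sum>j<L. if i < j then rel_dist (cs ! i) (cs ! j) else 0) / real (L choose 2)"
      using assms(4) by auto
    moreover have "\<dots> < \<delta>"
      using average_pairwise_rel_dist_less[OF assms(1,2) y] cs assms(3) by auto
    ultimately show False
      by simp
  qed
qed

end
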